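(* If $X$ satisfies $selSS^*_{cd}(\mathcal{O},\Gamma)$, has countable extent, and $|X|<\mathfrak{d}$, then $X$ is selectively strongly star-Menger.
   Context: All spaces are regular. $St(A,\mathcal{U})=\bigcup\{U\in\mathcal{U}:U\cap A\neq\emptyset\}$. $\mathfrak{d}$ is the dominating number. $X$ has countable extent if every closed discrete subset of $X$ is countable. $selSS^*_{cd}(\mathcal{O},\Gamma)$: for every sequence $(\mathcal{U}_n:n\in\omega)$ of open covers and every sequence $(D_n:n\in\omega)$ of dense subsets of $X$ there are sets $C_n\subseteq D_n$, closed and discrete in $X$, such that every $x\in X$ lies in $St(C_n,\mathcal{U}_n)$ for all but finitely many $n$. $X$ is selectively strongly star-Menger if for every sequence $(\mathcal{U}_n)$ of open covers and every sequence $(D_n)$ of dense subsets there are finite $F_n\subseteq D_n$ with $\{St(F_n,\mathcal{U}_n):n\in\omega\}$ covering $X$. *)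

theory Defs
  imports "HOL-Analysis.Analysis"
begin

definition St :: "'a set \<Rightarrow> 'a set set \<Rightarrow> 'a set" where
  "St A \<U> = \<Union>{U \<in> \<U>. U \<inter> A \<noteq> {}}"

definition open_cover :: "'a topology \<Rightarrow> 'a set set \<Rightarrow> bool" where
  "open_cover X \<U> \<longleftrightarrow> (\<forall>U\<in>\<U>. openin X U) \<and> \<Union>\<U> = topspace X"

definition dense_in :: "'a topology \<Rightarrow> 'a set \<Rightarrow> bool" where
  "dense_in X D \<longleftrightarrow> D \<subseteq> topspace X \<and> X closure_of D = topspace X"

definition closed_discrete_in :: "'a topology \<Rightarrow> 'a set \<Rightarrow> bool" where
  "closed_discrete_in X C \<longleftrightarrow> closedin X C \<and> subtopology X C = discrete_topology C"

definition countable_extent :: "'a topology \<Rightarrow> bool" where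
  "countable_extent X \<longleftrightarrow> (\<forall>C. closed_discrete_in X C \<longrightarrow> countable C)"

definition dominating :: "(nat \<Rightarrow> nat) set \<Rightarrow> bool" where
  "dominating D \<longleftrightarrow> (\<forall>g. \<exists>f\<in>D. \<forall>\<^sub>F n in sequentially. g n \<le> f n)"

text \<open>|A| < d: no dominating family has cardinality at most |A|
  (a family has cardinality at most |A| iff it is covered by the image of A).\<close>
definition card_less_dominating :: "'a set \<Rightarrow> bool" where
  "card_less_dominating A \<longleftrightarrow> (\<forall>D. dominating D \<longrightarrow> \<not> (\<exists>h::'a \<Rightarrow> nat \<Rightarrow> nat. D \<subseteq> h ` A))"

definition selSS_cd_O_Gamma :: "'a topology \<Rightarrow> bool" where
  "selSS_cd_O_Gamma X \<longleftrightarrow>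
    (\<forall>\<U> \<D>. (\<forall>n::nat. open_cover X (\<U> n)) \<and> (\<forall>n. dense_in X (\<D> n)) \<longrightarrow>
      (\<exists>C. (\<forall>n. C n \<subseteq> \<D> n \<and> closed_discrete_in X (C n)) \<and>
           (\<forall>x\<in>topspace X. \<forall>\<^sub>F n in sequentially. x \<in> St (C n) (\<U> n))))"

definition selectively_strongly_star_Menger :: "'a topology \<Rightarrow> bool" where
  "selectively_strongly_star_Menger X \<longleftrightarrow>
    (\<forall>\<U> \<D>. (\<forall>n::nat. open_cover X (\<U> n)) \<and> (\<forall>n. dense_in X (\<D> n)) \<longrightarrow>
      (\<exists>F. (\<forall>n. finite (F n) \<and> F n \<subseteq> \<D> n) \<and>
           topspace X \<subseteq> (\<Union>n. St (F n) (\<U> n))))"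

end

theory Submission
  imports Defs
begin

text \<open>Enumerate each countable closed discrete set C n given by the hypothesis
  selSS*cd(O,\<Gamma>), and let f x n be the least k such that x lies in the star of the
  first k points of C n. Since |X| < \<d>, the family of these f x is not dominating,
  so some g exceeds every f x infinitely often; as x lies in the star of C n for almost
  all n, the finite sets of the first g n points of C n witness selective strong
  star-Mengerness.\<close>

lemma St_mono: "A \<subseteq> B \<Longrightarrow> St A \<U> \<subseteq> St B \<U>"
  unfolding St_def by blast

definition to_nat_prefix :: "'a set \<Rightarrow> nat \<Rightarrow> 'a set" where
  "to_nat_prefix C k = {c \<in> C. to_nat_on C c \<le> k}"

lemma to_nat_prefix_subset: "to_nat_prefix C k \<subseteq> C"
  unfolding to_nat_prefix_def by blast

lemma mono_to_nat_prefix: "mono (to_nat_prefix C)"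
  unfolding to_nat_prefix_def by (auto intro: monoI)

lemma finite_to_nat_prefix:
  assumes "countable C"
  shows "finite (to_nat_prefix C k)"
proof (rule finite_imageD)
  show "inj_on (to_nat_on C) (to_nat_prefix C k)"
    using inj_on_to_nat_on[OF assms] to_nat_prefix_subset by (rule inj_on_subset)
  show "finite (to_nat_on C ` to_nat_prefix C k)"
    by (rule finite_subset[of _ "{..k}"]) (auto simp: to_nat_prefix_def)
qed

lemma mono_St_to_nat_prefix: "mono (\<lambda>k. St (to_nat_prefix C k) \<U>)"
proof (rule monoI)
  show "St (to_nat_prefix C k) \<U> \<subseteq> St (to_nat_prefix C l) \<U>" if "k \<le> l" for k l
    by (rule St_mono, rule monoD[OF mono_to_nat_prefix that])
qed

lemma St_subset_UN_to_nat_prefix: "St C \<U> \<subseteq> (\<Union>k. St (to_nat_prefix C k) \<U>)"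
  unfolding St_def to_nat_prefix_def by blast

lemma card_less_dominating_escape:
  fixes f :: "'a \<Rightarrow> nat \<Rightarrow> nat"
  assumes "card_less_dominating A"
  obtains g where "\<And>x. x \<in> A \<Longrightarrow> \<exists>\<^sub>F n in sequentially. f x n < g n"
proof -
  have "\<not> dominating (f ` A)"
    using assms unfolding card_less_dominating_def by blast
  then obtain g where "\<And>x. x \<in> A \<Longrightarrow> \<not> (\<forall>\<^sub>F n in sequentially. g n \<le> f x n)"
    unfolding dominating_def by blast
  then have "\<And>x. x \<in> A \<Longrightarrow> \<exists>\<^sub>F n in sequentially. f x n < g n"
    by (simp add: not_eventually not_le)
  with that show ?thesis .
qed

lemma card_less_dominating_cover_by_diagonal:
  fixes S :: "nat \<Rightarrow> nat \<Rightarrow> 'a set"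
  assumes "card_less_dominating A"
    and mono: "\<And>n. mono (S n)"
    and ev: "\<And>x. x \<in> A \<Longrightarrow> \<forall>\<^sub>F n in sequentially. x \<in> (\<Union>k. S n k)"
  obtains g where "A \<subseteq> (\<Union>n. S n (g n))"
proof -
  define f where "f x n = (LEAST k. x \<in> S n k)" for x n
  obtain g where g: "\<And>x. x \<in> A \<Longrightarrow> \<exists>\<^sub>F n in sequentially. f x n < g n"
    using card_less_dominating_escape[OF assms(1)] by blast
  have "x \<in> (\<Union>n. S n (g n))" if x: "x \<in> A" for x
  proof -
    obtain n where n: "f x n < g n" "x \<in> (\<Union>k. S n k)"
      using frequently_ex[OF frequently_eventually_frequently[OF g[OF x] ev[OF x]]] by blast
    then obtain k where "x \<in> S n k" by blast
    then have "x \<in> S n (f x n)"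
      unfolding f_def by (rule LeastI)
    moreover have "S n (f x n) \<subseteq> S n (g n)"
      using mono n(1) by (simp add: monoD)
    ultimately show ?thesis by blast
  qed
  then show ?thesis using that by blast
qed

theorem mainTheorem13:
  fixes X :: "'a topology"
  assumes "regular_space X"
    and "selSS_cd_O_Gamma X"
    and "countable_extent X"
    and "card_less_dominating (topspace X)"
  shows "selectively_strongly_star_Menger X"
  unfolding selectively_strongly_star_Menger_def
proof (intro allI impI)
  fix \<U> :: "nat \<Rightarrow> 'a set set" and \<D> :: "nat \<Rightarrow> 'a set"
  assume "(\<forall>n. open_cover X (\<U> n)) \<and> (\<forall>n. dense_in X (\<D> n))"
  with assms(2) have "\<exists>C. (\<forall>n. C n \<subseteq> \<D> n \<and> closed_discrete_in X (C n)) \<and>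
      (\<forall>x\<in>topspace X. \<forall>\<^sub>F n in sequentially. x \<in> St (C n) (\<U> n))"
    unfolding selSS_cd_O_Gamma_def by (elim allE impE) auto
  then obtain C where C: "\<And>n. C n \<subseteq> \<D> n \<and> closed_discrete_in X (C n)"
    and C_star: "\<And>x. x \<in> topspace X \<Longrightarrow> \<forall>\<^sub>F n in sequentially. x \<in> St (C n) (\<U> n)"
    by blast
  have countable_C: "countable (C n)" for n
    using assms(3) C unfolding countable_extent_def by blast
  have prefix_star_eventually:
    "\<forall>\<^sub>F n in sequentially. x \<in> (\<Union>k. St (to_nat_prefix (C n) k) (\<U> n))"
    if "x \<in> topspace X" for x
    by (rule eventually_mono[OF C_star[OF that] subsetD[OF St_subset_UN_to_nat_prefix]])
  obtain g where cover: "topspace X \<subseteq> (\<Union>n. St (to_nat_prefix (C n) (g n)) (\<U> n))"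
    using card_less_dominating_cover_by_diagonal[OF assms(4) mono_St_to_nat_prefix prefix_star_eventually]
    by blast
  have "finite (to_nat_prefix (C n) (g n))" for n
    by (rule finite_to_nat_prefix[OF countable_C])
  moreover have "to_nat_prefix (C n) (g n) \<subseteq> \<D> n" for n
    using C[of n] to_nat_prefix_subset[of "C n" "g n"] by blast
  ultimately show "\<exists>F. (\<forall>n. finite (F n) \<and> F n \<subseteq> \<D> n) \<and> topspace X \<subseteq> (\<Union>n. St (F n) (\<U> n))"
    using cover by (intro exI[of _ "\<lambda>n. to_nat_prefix (C n) (g n)"]) simp
qed

end
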